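(* Assume the setting described in the context and that Condition D holds. Then there is a constant $C$ such that for all $n\in\mathbb N$, \[ \|\bar\zeta_{n,\mathbf 0}-\bar Z_{n,\mathbf 0}\|_2\le C\Big[\Big(\frac{B_{m_n}}{b_n}\Big)^{1/2}+b_n^{1/2}\Big]. \]
   Context: Let $d\in\mathbb N$. For $i,k\in\mathbb Z^d$ write $i\succeq k$ if $i_\tau\ge k_\tau$ for all $\tau$; $\mathbf 0=(0,\dots,0)$, $|i|_\infty=\max_\tau|i_\tau|$, $[\![a,b]\!]=\{a,\dots,b\}$. Let $(\epsilon_i)_{i\in\mathbb Z^d}$ be i.i.d. real random variables with mean zero and finite second moment, $(a_k)_{k\succeq\mathbf 0}$ real with $\sum a_k^2<\infty$, and $X_i=\sum_{k\succeq\mathbf 0}a_k\epsilon_{i-k}$. $K$ is a bounded Lipschitz probability density on $\mathbb R$; $b_n>0$, $b_n\to0$, $n^db_n\to\infty$. $(m_n)$ is a sequence of positive integers; for $m\in\mathbb N$, $X_{i,m}=\sum_{k\in[\![0,m-1]\!]^d}a_k\epsilon_{i-k}$. $p,p_m$ are the densities of $X_{\mathbf 0},X_{\mathbf 0,m}$; $p_i,p_{i,m}$ ($i\ne\mathbf 0$) the joint densities of $(X_{\mathbf 0},X_i)$, $(X_{\mathbf 0,m},X_{i,m})$. Condition D: (i) $p$ and all $p_m$ exist, are Lipschitz with a common constant independent of $m$, and $\sup_xp(x)<\infty$, $\sup_m\sup_xp_m(x)<\infty$; (ii) $p_i,p_{i,m}$ exist for all $i\ne\mathbf 0,m$ and $\sup_{i\ne\mathbf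 0}\sup_{x,y}p_i<\infty$, $\sup_m\sup_{i\ne\mathbf 0}\sup_{x,y}p_{i,m}<\infty$. $B_m=(\sum_{i\succeq\mathbf 0,|i|_\infty\ge m}a_i^2)^{1/2}$. Fix $x\in\mathbb R$; $Z_{n,\mathbf 0}=b_n^{-1/2}K((x-X_{\mathbf 0})/b_n)$, $\zeta_{n,\mathbf 0}=b_n^{-1/2}K((x-X_{\mathbf 0,m_n})/b_n)$, $\bar Z_{n,\mathbf 0}=Z_{n,\mathbf 0}-\mathbb EZ_{n,\mathbf 0}$, $\bar\zeta_{n,\mathbf 0}=\zeta_{n,\mathbf 0}-\mathbb E\zeta_{n,\mathbf 0}$. *)

theory Defs
  imports "HOL-Probability.Probability"
begin

text \<open>Lattice indices: Z^d is rendered as functions 'd => int with 'd a finite type, d = CARD('d).\<close>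

definition nonneg_idx :: "('d::finite \<Rightarrow> int) \<Rightarrow> bool" where
  "nonneg_idx k \<longleftrightarrow> (\<forall>\<tau>. 0 \<le> k \<tau>)"

definition sup_norm_idx :: "('d::finite \<Rightarrow> int) \<Rightarrow> int" where
  "sup_norm_idx i = Max (range (\<lambda>\<tau>. \<bar>i \<tau>\<bar>))"

definition box_idx :: "nat \<Rightarrow> ('d::finite \<Rightarrow> int) set" where
  "box_idx m = {k. \<forall>\<tau>. 0 \<le> k \<tau> \<and> k \<tau> \<le> int m - 1}"

definition X_trunc ::
  "(('d::finite \<Rightarrow> int) \<Rightarrow> 'a \<Rightarrow> real) \<Rightarrow> (('d \<Rightarrow> int) \<Rightarrow> real) \<Rightarrow> nat \<Rightarrow> ('d \<Rightarrow> int) \<Rightarrow> 'a \<Rightarrow> real" where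
  "X_trunc eps a m i \<omega> = (\<Sum>k\<in>box_idx m. a k * eps (\<lambda>\<tau>. i \<tau> - k \<tau>) \<omega>)"

definition B_tail :: "(('d::finite \<Rightarrow> int) \<Rightarrow> real) \<Rightarrow> nat \<Rightarrow> real" where
  "B_tail a m = sqrt (infsum (\<lambda>k. (a k)\<^sup>2) {k. nonneg_idx k \<and> sup_norm_idx k \<ge> int m})"

definition L2_norm :: "'a measure \<Rightarrow> ('a \<Rightarrow> real) \<Rightarrow> real" where
  "L2_norm M f = sqrt (integral\<^sup>L M (\<lambda>\<omega>. (f \<omega>)\<^sup>2))"

end

theory Submission
  imports Defs
begin

text \<open>
  Put \<open>f(y) = K((x - y)/b) / sqrt b\<close>, \<open>S = X\<^sub>0\<^sub>,\<^sub>m\<close> and, for \<open>N \<ge> m\<close>,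
  \<open>D = X\<^sub>0\<^sub>,\<^sub>N - S\<close>. The increment \<open>D\<close> is a combination of innovations disjoint from those
  of \<open>S\<close>, so it is independent of \<open>S\<close>, and \<open>E D\<^sup>2 \<le> \<sigma>\<^sup>2 B\<^sub>m\<^sup>2\<close>. As \<open>K \<ge> 0\<close> is
  \<open>L\<close>-Lipschitz, \<open>(u - v)\<^sup>2 \<le> \<bar>u - v\<bar> (u + v)\<close> gives
  \<open>(f(S) - f(S + D))\<^sup>2 \<le> L b\<^sup>-\<^sup>2 \<bar>D\<bar> (K((x - S)/b) + K((x - S - D)/b))\<close>, i.e. only one
  Lipschitz factor is spent. Integrating first over \<open>S\<close>, whose density is bounded by \<open>c\<close>,
  yields \<open>E[\<bar>D\<bar> K((x - S - t D)/b)] \<le> c b E\<bar>D\<bar>\<close>, hence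
  \<open>E (f(S) - f(X\<^sub>0\<^sub>,\<^sub>N))\<^sup>2 \<le> 2 L c \<sigma> B\<^sub>m / b\<close>. Letting \<open>N \<rightarrow> \<infinity>\<close> (\<open>f\<close> is Lipschitz and
  \<open>X\<^sub>0\<^sub>,\<^sub>N \<rightarrow> X\<^sub>0\<close> in \<open>L\<^sup>2\<close>) and using that centring does not increase the \<open>L\<^sup>2\<close> norm
  gives the bound, even without the term \<open>b\<^sup>1\<^sup>/\<^sup>2\<close>.
\<close>

lemma L2_norm_nonneg [simp]: "0 \<le> L2_norm M f"
  unfolding L2_norm_def by (intro real_sqrt_ge_zero integral_nonneg_AE) auto

lemma L2_norm_sq: "(L2_norm M f)\<^sup>2 = (\<integral>\<omega>. (f \<omega>)\<^sup>2 \<partial>M)"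
  unfolding L2_norm_def by (intro real_sqrt_pow2 integral_nonneg_AE) auto

lemma integrable_mult_of_square_integrable:
  fixes u v :: "'a \<Rightarrow> real"
  assumes [measurable]: "u \<in> borel_measurable M" "v \<in> borel_measurable M"
    and "integrable M (\<lambda>\<omega>. (u \<omega>)\<^sup>2)" "integrable M (\<lambda>\<omega>. (v \<omega>)\<^sup>2)"
  shows "integrable M (\<lambda>\<omega>. u \<omega> * v \<omega>)"
proof (rule Bochner_Integration.integrable_bound)
  show "integrable M (\<lambda>\<omega>. ((u \<omega>)\<^sup>2 + (v \<omega>)\<^sup>2) / 2)"
    using assms by auto
  show "AE \<omega> in M. norm (u \<omega> * v \<omega>) \<le> norm (((u \<omega>)\<^sup>2 + (v \<omega>)\<^sup>2) / 2)"
  proof (rule AE_I2)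
    fix \<omega>
    show "norm (u \<omega> * v \<omega>) \<le> norm (((u \<omega>)\<^sup>2 + (v \<omega>)\<^sup>2) / 2)"
      using sum_squares_bound[of "\<bar>u \<omega>\<bar>" "\<bar>v \<omega>\<bar>"] by (simp add: abs_mult)
  qed
qed simp

lemma integrable_sq_diff:
  fixes u v :: "'a \<Rightarrow> real"
  assumes [measurable]: "u \<in> borel_measurable M" "v \<in> borel_measurable M"
    and iu: "integrable M (\<lambda>\<omega>. (u \<omega>)\<^sup>2)" and iv: "integrable M (\<lambda>\<omega>. (v \<omega>)\<^sup>2)"
  shows "integrable M (\<lambda>\<omega>. (u \<omega> - v \<omega>)\<^sup>2)"
proof -
  have "integrable M (\<lambda>\<omega>. (u \<omega>)\<^sup>2 + (v \<omega>)\<^sup>2 - 2 * (u \<omega> * v \<omega>))"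
    using iu iv integrable_mult_of_square_integrable[OF assms] by auto
  then show ?thesis
    by (simp add: power2_diff mult.assoc)
qed

lemma integral_abs_mult_le_L2_norm:
  fixes u v :: "'a \<Rightarrow> real"
  assumes [measurable]: "u \<in> borel_measurable M" "v \<in> borel_measurable M"
    and iu: "integrable M (\<lambda>\<omega>. (u \<omega>)\<^sup>2)" and iv: "integrable M (\<lambda>\<omega>. (v \<omega>)\<^sup>2)"
  shows "(\<integral>\<omega>. \<bar>u \<omega> * v \<omega>\<bar> \<partial>M) \<le> L2_norm M u * L2_norm M v"
proof -
  have iuv: "integrable M (\<lambda>\<omega>. \<bar>u \<omega> * v \<omega>\<bar>)"
    using integrable_mult_of_square_integrable[OF assms] by simp
  have nn_sq: "(\<integral>\<^sup>+\<omega>. ennreal ((w \<omega>)\<^sup>2) \<partial>M) = ennreal (\<integral>\<omega>. (w \<omega>)\<^sup>2 \<partial>M)"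
    if "integrable M (\<lambda>\<omega>. (w \<omega>)\<^sup>2)" for w
    using that by (intro nn_integral_eq_integral) auto
  have "(\<integral>\<^sup>+\<omega>. ennreal \<bar>u \<omega>\<bar> * ennreal \<bar>v \<omega>\<bar> \<partial>M)\<^sup>2 \<le>
      (\<integral>\<^sup>+\<omega>. (ennreal \<bar>u \<omega>\<bar>)\<^sup>2 \<partial>M) * (\<integral>\<^sup>+\<omega>. (ennreal \<bar>v \<omega>\<bar>)\<^sup>2 \<partial>M)"
    by (rule Cauchy_Schwarz_nn_integral) auto
  also have "(\<integral>\<^sup>+\<omega>. ennreal \<bar>u \<omega>\<bar> * ennreal \<bar>v \<omega>\<bar> \<partial>M) = ennreal (\<integral>\<omega>. \<bar>u \<omega> * v \<omega>\<bar> \<partial>M)"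
    using iuv by (subst nn_integral_eq_integral[symmetric]) (auto simp: ennreal_mult' abs_mult)
  finally have "(\<integral>\<omega>. \<bar>u \<omega> * v \<omega>\<bar> \<partial>M)\<^sup>2 \<le> (\<integral>\<omega>. (u \<omega>)\<^sup>2 \<partial>M) * (\<integral>\<omega>. (v \<omega>)\<^sup>2 \<partial>M)"
    by (simp add: ennreal_power nn_sq[OF iu] nn_sq[OF iv] ennreal_mult'[symmetric] ennreal_le_iff
        integral_nonneg_AE)
  then show ?thesis
    unfolding L2_norm_def real_sqrt_mult[symmetric] by (rule real_le_rsqrt)
qed

lemma L2_norm_add_le:
  fixes u v :: "'a \<Rightarrow> real"
  assumes [measurable]: "u \<in> borel_measurable M" "v \<in> borel_measurable M"
    and iu: "integrable M (\<lambda>\<omega>. (u \<omega>)\<^sup>2)" and iv: "integrable M (\<lambda>\<omega>. (v \<omega>)\<^sup>2)"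
  shows "L2_norm M (\<lambda>\<omega>. u \<omega> + v \<omega>) \<le> L2_norm M u + L2_norm M v"
proof -
  have iuv: "integrable M (\<lambda>\<omega>. u \<omega> * v \<omega>)"
    by (rule integrable_mult_of_square_integrable[OF assms])
  have "(\<integral>\<omega>. (u \<omega> + v \<omega>)\<^sup>2 \<partial>M) = (\<integral>\<omega>. (u \<omega>)\<^sup>2 + 2 * (u \<omega> * v \<omega>) + (v \<omega>)\<^sup>2 \<partial>M)"
    by (simp add: power2_sum algebra_simps)
  also have "\<dots> = (L2_norm M u)\<^sup>2 + 2 * (\<integral>\<omega>. u \<omega> * v \<omega> \<partial>M) + (L2_norm M v)\<^sup>2"
    using iu iv iuv by (simp add: L2_norm_sq)
  also have "(\<integral>\<omega>. u \<omega> * v \<omega> \<partial>M) \<le> (\<integral>\<omega>. \<bar>u \<omega> * v \<omega>\<bar> \<partial>M)"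
    using iuv by (intro integral_mono) auto
  also note integral_abs_mult_le_L2_norm[OF assms]
  also have "(L2_norm M u)\<^sup>2 + 2 * (L2_norm M u * L2_norm M v) + (L2_norm M v)\<^sup>2
      = (L2_norm M u + L2_norm M v)\<^sup>2"
    by (simp add: power2_sum)
  finally show ?thesis
    unfolding L2_norm_def[of M "\<lambda>\<omega>. u \<omega> + v \<omega>"] by (rule real_le_lsqrt[rotated]) auto
qed

lemma L2_norm_comp_lipschitz_le:
  fixes f :: "real \<Rightarrow> real" and U V :: "'a \<Rightarrow> real"
  assumes [measurable]: "f \<in> borel_measurable borel" "U \<in> borel_measurable M" "V \<in> borel_measurable M"
    and lip: "\<And>y z. \<bar>f y - f z\<bar> \<le> L * \<bar>y - z\<bar>" and "0 \<le> L"
    and iUV: "integrable M (\<lambda>\<omega>. (U \<omega> - V \<omega>)\<^sup>2)"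
  shows "integrable M (\<lambda>\<omega>. (f (U \<omega>) - f (V \<omega>))\<^sup>2)"
    and "L2_norm M (\<lambda>\<omega>. f (U \<omega>) - f (V \<omega>)) \<le> L * L2_norm M (\<lambda>\<omega>. U \<omega> - V \<omega>)"
proof -
  have pw: "(f (U \<omega>) - f (V \<omega>))\<^sup>2 \<le> L\<^sup>2 * (U \<omega> - V \<omega>)\<^sup>2" for \<omega>
    using power_mono[OF lip abs_ge_zero, of "U \<omega>" "V \<omega>" 2]
    by (simp add: power_mult_distrib)
  have iL: "integrable M (\<lambda>\<omega>. L\<^sup>2 * (U \<omega> - V \<omega>)\<^sup>2)"
    using iUV by simp
  show "integrable M (\<lambda>\<omega>. (f (U \<omega>) - f (V \<omega>))\<^sup>2)"
  proof (rule Bochner_Integration.integrable_bound[OF iL])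
    show "AE \<omega> in M. norm ((f (U \<omega>) - f (V \<omega>))\<^sup>2) \<le> norm (L\<^sup>2 * (U \<omega> - V \<omega>)\<^sup>2)"
      using pw by (intro AE_I2) simp
  qed measurable
  then have "(\<integral>\<omega>. (f (U \<omega>) - f (V \<omega>))\<^sup>2 \<partial>M) \<le> (\<integral>\<omega>. L\<^sup>2 * (U \<omega> - V \<omega>)\<^sup>2 \<partial>M)"
    using iL pw by (rule integral_mono)
  also have "\<dots> = (L * L2_norm M (\<lambda>\<omega>. U \<omega> - V \<omega>))\<^sup>2"
    by (simp add: power_mult_distrib L2_norm_sq)
  finally show "L2_norm M (\<lambda>\<omega>. f (U \<omega>) - f (V \<omega>)) \<le> L * L2_norm M (\<lambda>\<omega>. U \<omega> - V \<omega>)"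
    unfolding L2_norm_def[of M "\<lambda>\<omega>. f (U \<omega>) - f (V \<omega>)"]
    using \<open>0 \<le> L\<close> by (intro real_le_lsqrt) auto
qed

lemma (in prob_space) L2_norm_centered_diff_le:
  fixes u v :: "'a \<Rightarrow> real"
  assumes [measurable]: "u \<in> borel_measurable M" "v \<in> borel_measurable M"
    and iu: "integrable M (\<lambda>\<omega>. (u \<omega>)\<^sup>2)" and iv: "integrable M (\<lambda>\<omega>. (v \<omega>)\<^sup>2)"
  shows "L2_norm M (\<lambda>\<omega>. (u \<omega> - expectation u) - (v \<omega> - expectation v))
    \<le> L2_norm M (\<lambda>\<omega>. u \<omega> - v \<omega>)"
proof -
  define g where "g = (\<lambda>\<omega>. u \<omega> - v \<omega>)"
  have [simp]: "integrable M u" "integrable M v"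
    using iu iv by (auto intro: square_integrable_imp_integrable)
  have "integrable M (\<lambda>\<omega>. (g \<omega>)\<^sup>2)"
    unfolding g_def by (rule integrable_sq_diff[OF assms])
  then have "variance g \<le> expectation (\<lambda>\<omega>. (g \<omega>)\<^sup>2)"
    by (subst variance_eq) (auto simp: g_def)
  moreover have "(\<lambda>\<omega>. (u \<omega> - expectation u) - (v \<omega> - expectation v)) = (\<lambda>\<omega>. g \<omega> - expectation g)"
    by (simp add: g_def fun_eq_iff)
  ultimately show ?thesis
    by (simp add: L2_norm_def g_def)
qed

section \<open>The rescaled kernel\<close>

text \<open>\<open>scaled_kernel K b x X\<close> is the paper's \<open>b\<^sup>-\<^sup>1\<^sup>/\<^sup>2 K((x - X)/b)\<close>, i.e. \<open>Z\<^sub>n\<^sub>,\<^sub>0\<close> for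
  \<open>X = X\<^sub>0\<close> and \<open>\<zeta>\<^sub>n\<^sub>,\<^sub>0\<close> for \<open>X = X\<^sub>0\<^sub>,\<^sub>m\<^sub>n\<close>.\<close>
definition scaled_kernel :: "(real \<Rightarrow> real) \<Rightarrow> real \<Rightarrow> real \<Rightarrow> real \<Rightarrow> real" where
  "scaled_kernel K h x y = K ((x - y) / h) / sqrt h"

lemma scaled_kernel_measurable [measurable]:
  assumes [measurable]: "K \<in> borel_measurable borel"
  shows "scaled_kernel K h x \<in> borel_measurable borel"
  unfolding scaled_kernel_def by measurable

lemma abs_scaled_kernel_le:
  assumes nonneg: "\<And>u. 0 \<le> K u" and bound: "\<And>u. K u \<le> \<kappa>" and "0 < h"
  shows "\<bar>scaled_kernel K h x y\<bar> \<le> \<kappa> / sqrt h"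
  using nonneg[of "(x - y) / h"] bound[of "(x - y) / h"] \<open>0 < h\<close>
  by (simp add: scaled_kernel_def divide_right_mono)

lemma scaled_kernel_lipschitz:
  assumes lip: "\<And>u v. \<bar>K u - K v\<bar> \<le> L * \<bar>u - v\<bar>" and h: "0 < h"
  shows "\<bar>scaled_kernel K h x y - scaled_kernel K h x z\<bar> \<le> L / (h * sqrt h) * \<bar>y - z\<bar>"
proof -
  have "\<bar>scaled_kernel K h x y - scaled_kernel K h x z\<bar> = \<bar>K ((x - y) / h) - K ((x - z) / h)\<bar> / sqrt h"
    using h by (simp add: scaled_kernel_def diff_divide_distrib[symmetric] abs_divide)
  also have "\<dots> \<le> L * \<bar>(x - y) / h - (x - z) / h\<bar> / sqrt h"
    using h by (intro divide_right_mono lip) auto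
  also have "\<dots> = L / (h * sqrt h) * \<bar>y - z\<bar>"
    using h by (simp add: diff_divide_distrib[symmetric] abs_divide field_simps abs_minus_commute)
  finally show ?thesis .
qed

lemma scaled_kernel_diff_sq_le:
  assumes nonneg: "\<And>u. 0 \<le> K u" and lip: "\<And>u v. \<bar>K u - K v\<bar> \<le> L * \<bar>u - v\<bar>" and h: "0 < h"
  shows "(scaled_kernel K h x y - scaled_kernel K h x (y + d))\<^sup>2
    \<le> L / h\<^sup>2 * (\<bar>d\<bar> * K ((x - y) / h) + \<bar>d\<bar> * K ((x - y - d) / h))"
proof -
  define u v where "u = K ((x - y) / h)" and "v = K ((x - y - d) / h)"
  have uv_lip: "\<bar>u - v\<bar> \<le> L * \<bar>d\<bar> / h"
    using lip[of "(x - y) / h" "(x - y - d) / h"] h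
    by (simp add: u_def v_def diff_divide_distrib abs_divide)
  have uv_sum: "\<bar>u - v\<bar> \<le> u + v"
    using nonneg by (simp add: u_def v_def abs_le_iff add_increasing)
  have "(scaled_kernel K h x y - scaled_kernel K h x (y + d))\<^sup>2 = \<bar>u - v\<bar> * \<bar>u - v\<bar> / h"
    using h by (simp add: scaled_kernel_def u_def v_def diff_divide_distrib[symmetric] power_divide
        diff_diff_eq power2_eq_square)
  also have "\<dots> \<le> L * \<bar>d\<bar> / h * (u + v) / h"
    using uv_lip uv_sum h by (intro divide_right_mono mult_mono) auto
  also have "\<dots> = L / h\<^sup>2 * (\<bar>d\<bar> * u + \<bar>d\<bar> * v)"
    by (simp add: power2_eq_square field_simps)
  finally show ?thesis
    by (simp add: u_def v_def)
qed

lemma nn_integral_kernel_rescaled: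
  fixes K :: "real \<Rightarrow> real"
  assumes [measurable]: "K \<in> borel_measurable borel"
    and K1: "(\<integral>\<^sup>+u. ennreal (K u) \<partial>lborel) = 1" and h: "0 < h"
  shows "(\<integral>\<^sup>+s. ennreal (K ((y - s) / h)) \<partial>lborel) = ennreal h"
proof -
  have "1 = ennreal \<bar>- 1 / h\<bar> * (\<integral>\<^sup>+s. ennreal (K (y / h + (- 1 / h) * s)) \<partial>lborel)"
    unfolding K1[symmetric] by (rule nn_integral_real_affine) (use h in auto)
  also have "(\<lambda>s. ennreal (K (y / h + (- 1 / h) * s))) = (\<lambda>s. ennreal (K ((y - s) / h)))"
    by (intro ext) (simp add: diff_divide_distrib)
  finally have "1 = ennreal (1 / h) * (\<integral>\<^sup>+s. ennreal (K ((y - s) / h)) \<partial>lborel)"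
    using h by simp
  then have "ennreal h = ennreal h * ennreal (1 / h) * (\<integral>\<^sup>+s. ennreal (K ((y - s) / h)) \<partial>lborel)"
    by (metis mult.assoc mult.right_neutral)
  also have "ennreal h * ennreal (1 / h) = 1"
    using h by (simp add: ennreal_mult'[symmetric])
  finally show ?thesis by simp
qed

lemma lipschitz_probability_density:
  fixes K :: "real \<Rightarrow> real"
  assumes nonneg: "\<And>u. 0 \<le> K u" and int: "(K has_integral 1) UNIV" and L: "L-lipschitz_on UNIV K"
  shows "K \<in> borel_measurable borel" and "(\<integral>\<^sup>+u. ennreal (K u) \<partial>lborel) = 1"
    and "0 \<le> L" and "\<And>u v. \<bar>K u - K v\<bar> \<le> L * \<bar>u - v\<bar>"
proof -
  show meas: "K \<in> borel_measurable borel"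
    using L by (intro borel_measurable_continuous_onI lipschitz_on_continuous_on)
  show "(\<integral>\<^sup>+u. ennreal (K u) \<partial>lborel) = 1"
    using nn_integral_has_integral_lborel[OF meas nonneg int] by simp
  show "0 \<le> L" and "\<And>u v. \<bar>K u - K v\<bar> \<le> L * \<bar>u - v\<bar>"
    using L by (auto simp: lipschitz_on_def dist_real_def)
qed

lemma (in finite_measure) integrable_sq_scaled_kernel:
  assumes [measurable]: "K \<in> borel_measurable borel" "Y \<in> borel_measurable M"
    and nonneg: "\<And>u. 0 \<le> K u" and bound: "\<And>u. K u \<le> \<kappa>" and h: "0 < h"
  shows "integrable M (\<lambda>\<omega>. (scaled_kernel K h x (Y \<omega>))\<^sup>2)"
proof (rule integrable_const_bound[where B = "(\<kappa> / sqrt h)\<^sup>2"])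
  show "AE \<omega> in M. norm ((scaled_kernel K h x (Y \<omega>))\<^sup>2) \<le> (\<kappa> / sqrt h)\<^sup>2"
    using power_mono[OF abs_scaled_kernel_le[of K, OF nonneg bound h] abs_ge_zero, where n=2]
    by (intro AE_I2) simp
qed measurable

context prob_space
begin

lemma nn_integral_abs_mult_kernel_le:
  fixes S D :: "'a \<Rightarrow> real" and q K :: "real \<Rightarrow> real"
  assumes ind: "indep_var lborel S lborel D"
    and dens: "distributed M lborel S (\<lambda>y. ennreal (q y))"
    and q_le: "\<And>y. q y \<le> c" and q_nonneg: "\<And>y. 0 \<le> q y"
    and [measurable]: "K \<in> borel_measurable borel" and K_nonneg: "\<And>u. 0 \<le> K u"
    and K1: "(\<integral>\<^sup>+u. ennreal (K u) \<partial>lborel) = 1"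
    and h: "0 < h"
  shows "(\<integral>\<^sup>+\<omega>. ennreal (\<bar>D \<omega>\<bar> * K ((x - S \<omega> - t * D \<omega>) / h)) \<partial>M)
    \<le> ennreal (c * h) * (\<integral>\<^sup>+\<omega>. ennreal \<bar>D \<omega>\<bar> \<partial>M)"
proof -
  have c: "0 \<le> c" using q_le[of 0] q_nonneg[of 0] by simp
  have [measurable]: "S \<in> borel_measurable M" "D \<in> borel_measurable M"
    using indep_var_rv1[OF ind] indep_var_rv2[OF ind] by simp_all
  have [measurable]: "q \<in> borel_measurable borel"
    using distributed_borel_measurable[OF dens] q_nonneg by (subst (asm) borel_measurable_ennreal_iff) auto
  interpret S: prob_space "distr M lborel S" by (rule prob_space_distr) simp
  interpret D: prob_space "distr M lborel D" by (rule prob_space_distr) simp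
  interpret SD: pair_prob_space "distr M lborel S" "distr M lborel D" ..
  define F where "F z = ennreal (\<bar>snd z\<bar> * K ((x - fst z - t * snd z) / h))" for z :: "real \<times> real"
  have [measurable]: "F \<in> borel_measurable (lborel \<Otimes>\<^sub>M lborel)"
    unfolding F_def[abs_def] by measurable
  have inner: "(\<integral>\<^sup>+s. F (s, d) \<partial>distr M lborel S) \<le> ennreal (c * h) * ennreal \<bar>d\<bar>" for d
  proof -
    have "(\<integral>\<^sup>+s. F (s, d) \<partial>distr M lborel S) = (\<integral>\<^sup>+s. ennreal (q s) * F (s, d) \<partial>lborel)"
      by (simp add: distributed_distr_eq_density[OF dens] nn_integral_density)
    also have "\<dots> \<le> (\<integral>\<^sup>+s. ennreal (c * \<bar>d\<bar>) * ennreal (K ((x - t * d - s) / h)) \<partial>lborel)"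
    proof (rule nn_integral_mono)
      fix s
      have "q s * (\<bar>d\<bar> * K ((x - s - t * d) / h)) \<le> c * (\<bar>d\<bar> * K ((x - s - t * d) / h))"
        using K_nonneg by (intro mult_right_mono q_le) simp
      then show "ennreal (q s) * F (s, d) \<le> ennreal (c * \<bar>d\<bar>) * ennreal (K ((x - t * d - s) / h))"
        unfolding F_def using q_nonneg[of s] K_nonneg c
        by (simp add: ennreal_mult'[symmetric] ennreal_mult[symmetric] algebra_simps)
    qed
    also have "\<dots> = ennreal (c * \<bar>d\<bar>) * ennreal h"
      by (simp add: nn_integral_cmult nn_integral_kernel_rescaled[OF _ K1 h])
    also have "\<dots> = ennreal (c * h) * ennreal \<bar>d\<bar>"
      using c h by (simp add: ennreal_mult'[symmetric] ennreal_mult[symmetric] algebra_simps)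
    finally show ?thesis .
  qed
  have "(\<integral>\<^sup>+\<omega>. ennreal (\<bar>D \<omega>\<bar> * K ((x - S \<omega> - t * D \<omega>) / h)) \<partial>M)
      = (\<integral>\<^sup>+z. F z \<partial>distr M (lborel \<Otimes>\<^sub>M lborel) (\<lambda>\<omega>. (S \<omega>, D \<omega>)))"
    by (simp add: F_def nn_integral_distr)
  also have "\<dots> = (\<integral>\<^sup>+d. (\<integral>\<^sup>+s. F (s, d) \<partial>distr M lborel S) \<partial>distr M lborel D)"
    using ind by (simp add: indep_var_distribution_eq SD.nn_integral_snd sets_pair_measure_cong)
  also have "\<dots> \<le> (\<integral>\<^sup>+d. ennreal (c * h) * ennreal \<bar>d\<bar> \<partial>distr M lborel D)"
    by (intro nn_integral_mono inner)
  also have "\<dots> = ennreal (c * h) * (\<integral>\<^sup>+\<omega>. ennreal \<bar>D \<omega>\<bar> \<partial>M)"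
    by (simp add: nn_integral_cmult nn_integral_distr)
  finally show ?thesis .
qed

lemma integral_abs_mult_kernel_le:
  fixes S D :: "'a \<Rightarrow> real" and q K :: "real \<Rightarrow> real"
  assumes ind: "indep_var lborel S lborel D"
    and dens: "distributed M lborel S (\<lambda>y. ennreal (q y))"
    and q_le: "\<And>y. q y \<le> c" and q_nonneg: "\<And>y. 0 \<le> q y"
    and [measurable]: "K \<in> borel_measurable borel" and K_nonneg: "\<And>u. 0 \<le> K u"
    and K1: "(\<integral>\<^sup>+u. ennreal (K u) \<partial>lborel) = 1"
    and h: "0 < h" and D2: "integrable M (\<lambda>\<omega>. (D \<omega>)\<^sup>2)"
  shows "integrable M (\<lambda>\<omega>. \<bar>D \<omega>\<bar> * K ((x - S \<omega> - t * D \<omega>) / h))" (is "integrable M ?H")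
    and "(\<integral>\<omega>. \<bar>D \<omega>\<bar> * K ((x - S \<omega> - t * D \<omega>) / h) \<partial>M) \<le> c * h * L2_norm M D"
proof -
  have c: "0 \<le> c" using q_le[of 0] q_nonneg[of 0] by simp
  have [measurable]: "S \<in> borel_measurable M" "D \<in> borel_measurable M"
    using indep_var_rv1[OF ind] indep_var_rv2[OF ind] by simp_all
  have "integrable M D"
    by (rule square_integrable_imp_integrable[OF _ D2]) simp
  then have absD: "(\<integral>\<^sup>+\<omega>. ennreal \<bar>D \<omega>\<bar> \<partial>M) = ennreal (\<integral>\<omega>. \<bar>D \<omega>\<bar> \<partial>M)"
    by (intro nn_integral_eq_integral) auto
  have bound: "(\<integral>\<^sup>+\<omega>. ennreal (?H \<omega>) \<partial>M) \<le> ennreal (c * h * (\<integral>\<omega>. \<bar>D \<omega>\<bar> \<partial>M))"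
    using nn_integral_abs_mult_kernel_le[OF ind dens q_le q_nonneg _ K_nonneg K1 h, of x t] c h
    by (simp add: absD ennreal_mult)
  show iH: "integrable M ?H"
  proof (rule integrableI_nonneg)
    show "(\<integral>\<^sup>+\<omega>. ennreal (?H \<omega>) \<partial>M) < \<infinity>"
      using bound by (rule order.strict_trans1) simp
    show "AE \<omega> in M. 0 \<le> ?H \<omega>"
      using K_nonneg by simp
  qed measurable
  have "ennreal (\<integral>\<omega>. ?H \<omega> \<partial>M) = (\<integral>\<^sup>+\<omega>. ennreal (?H \<omega>) \<partial>M)"
    using iH K_nonneg by (intro nn_integral_eq_integral[symmetric]) auto
  with bound have "ennreal (\<integral>\<omega>. ?H \<omega> \<partial>M) \<le> ennreal (c * h * (\<integral>\<omega>. \<bar>D \<omega>\<bar> \<partial>M))"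
    by simp
  moreover have "0 \<le> c * h * (\<integral>\<omega>. \<bar>D \<omega>\<bar> \<partial>M)"
    using c h by (intro mult_nonneg_nonneg integral_nonneg_AE) auto
  ultimately have "(\<integral>\<omega>. ?H \<omega> \<partial>M) \<le> c * h * (\<integral>\<omega>. \<bar>D \<omega>\<bar> \<partial>M)"
    by (simp add: ennreal_le_iff)
  also have "(\<integral>\<omega>. \<bar>D \<omega>\<bar> \<partial>M) \<le> L2_norm M D"
    using integral_abs_mult_le_L2_norm[of D M "\<lambda>_. 1"] D2 by (simp add: L2_norm_def prob_space)
  finally show "(\<integral>\<omega>. ?H \<omega> \<partial>M) \<le> c * h * L2_norm M D"
    using c h by (simp add: mult_left_mono)
qed

lemma scaled_kernel_perturbation_sq_le:
  fixes S D :: "'a \<Rightarrow> real" and q K :: "real \<Rightarrow> real"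
  assumes ind: "indep_var lborel S lborel D"
    and dens: "distributed M lborel S (\<lambda>y. ennreal (q y))"
    and q_le: "\<And>y. q y \<le> c" and q_nonneg: "\<And>y. 0 \<le> q y"
    and K_meas: "K \<in> borel_measurable borel" and K_nonneg: "\<And>u. 0 \<le> K u"
    and lip: "\<And>u v. \<bar>K u - K v\<bar> \<le> L * \<bar>u - v\<bar>" and "0 \<le> L"
    and K1: "(\<integral>\<^sup>+u. ennreal (K u) \<partial>lborel) = 1"
    and h: "0 < h" and D2: "integrable M (\<lambda>\<omega>. (D \<omega>)\<^sup>2)"
  shows "(\<integral>\<omega>. (scaled_kernel K h x (S \<omega>) - scaled_kernel K h x (S \<omega> + D \<omega>))\<^sup>2 \<partial>M)
    \<le> 2 * L * c * L2_norm M D / h"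
proof -
  note H = integral_abs_mult_kernel_le[OF ind dens q_le q_nonneg K_meas K_nonneg K1 h D2, of x]
  define R where "R = (\<lambda>\<omega>. L / h\<^sup>2 * (\<bar>D \<omega>\<bar> * K ((x - S \<omega>) / h) + \<bar>D \<omega>\<bar> * K ((x - S \<omega> - D \<omega>) / h)))"
  have iR: "integrable M R"
    using H(1)[of 0] H(1)[of 1] by (simp add: R_def)
  have R_nonneg: "0 \<le> R \<omega>" for \<omega>
    using \<open>0 \<le> L\<close> K_nonneg by (simp add: R_def)
  have pw: "(scaled_kernel K h x (S \<omega>) - scaled_kernel K h x (S \<omega> + D \<omega>))\<^sup>2 \<le> R \<omega>" for \<omega>
    unfolding R_def using scaled_kernel_diff_sq_le[OF K_nonneg lip h] by simp
  have [measurable]: "S \<in> borel_measurable M" "D \<in> borel_measurable M"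
    using indep_var_rv1[OF ind] indep_var_rv2[OF ind] by simp_all
  have "integrable M (\<lambda>\<omega>. (scaled_kernel K h x (S \<omega>) - scaled_kernel K h x (S \<omega> + D \<omega>))\<^sup>2)"
  proof (rule Bochner_Integration.integrable_bound[OF iR])
    show "AE \<omega> in M. norm ((scaled_kernel K h x (S \<omega>) - scaled_kernel K h x (S \<omega> + D \<omega>))\<^sup>2) \<le> norm (R \<omega>)"
      using pw R_nonneg by (intro AE_I2) simp
  qed (use K_meas in measurable)
  then have "(\<integral>\<omega>. (scaled_kernel K h x (S \<omega>) - scaled_kernel K h x (S \<omega> + D \<omega>))\<^sup>2 \<partial>M)
      \<le> (\<integral>\<omega>. R \<omega> \<partial>M)"
    using iR pw by (rule integral_mono)
  also have "\<dots> = L / h\<^sup>2 * ((\<integral>\<omega>. \<bar>D \<omega>\<bar> * K ((x - S \<omega> - 0 * D \<omega>) / h) \<partial>M)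
      + (\<integral>\<omega>. \<bar>D \<omega>\<bar> * K ((x - S \<omega> - 1 * D \<omega>) / h) \<partial>M))"
    using H(1)[of 0] H(1)[of 1] by (simp add: R_def)
  also have "\<dots> \<le> L / h\<^sup>2 * (c * h * L2_norm M D + c * h * L2_norm M D)"
    using H(2)[of 0] H(2)[of 1] \<open>0 \<le> L\<close> by (intro mult_left_mono add_mono) auto
  also have "\<dots> = 2 * L * c * L2_norm M D / h"
    using h by (simp add: power2_eq_square field_simps)
  finally show ?thesis .
qed

end

section \<open>Linear combinations of independent innovations\<close>

lemma (in prob_space) indep_var_lin_comb:
  fixes e :: "'i \<Rightarrow> 'a \<Rightarrow> real"
  assumes indep: "indep_vars (\<lambda>_. borel) e UNIV" and disj: "g ` F \<inter> g ` G = {}"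
  shows "indep_var lborel (\<lambda>\<omega>. \<Sum>k\<in>F. w k * e (g k) \<omega>) lborel (\<lambda>\<omega>. \<Sum>k\<in>G. w k * e (g k) \<omega>)"
proof -
  have sum_measurable: "(\<lambda>f. \<Sum>k\<in>H. w k * f (g k)) \<in> measurable (PiM (g ` H) (\<lambda>_. borel)) lborel"
    for H
    unfolding measurable_lborel1
    by (intro borel_measurable_sum borel_measurable_times borel_measurable_const
        measurable_component_singleton) auto
  have "indep_var (PiM (g ` F) (\<lambda>_. borel)) (\<lambda>\<omega>. restrict (\<lambda>i. e i \<omega>) (g ` F))
      (PiM (g ` G) (\<lambda>_. borel)) (\<lambda>\<omega>. restrict (\<lambda>i. e i \<omega>) (g ` G))"
    by (rule indep_var_restrict[OF indep disj]) auto
  from indep_var_compose[OF this sum_measurable sum_measurable] show ?thesis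
    by (simp add: comp_def)
qed

locale centered_indep_family = prob_space +
  fixes e :: "'i \<Rightarrow> 'a \<Rightarrow> real" and \<sigma>2 :: real
  assumes indep: "indep_vars (\<lambda>_. borel) e UNIV"
    and integrable_sq: "\<And>i. integrable M (\<lambda>\<omega>. (e i \<omega>)\<^sup>2)"
    and mean_zero: "\<And>i. expectation (e i) = 0"
    and second_moment: "\<And>i. expectation (\<lambda>\<omega>. (e i \<omega>)\<^sup>2) = \<sigma>2"
begin

lemma measurable_e [measurable]: "e i \<in> borel_measurable M"
  using indep by (simp add: indep_vars_def)

lemma second_moment_nonneg: "0 \<le> \<sigma>2"
  using second_moment[of undefined, symmetric] by (simp add: integral_nonneg_AE)

lemma integrable_mult_e: "integrable M (\<lambda>\<omega>. e i \<omega> * e j \<omega>)"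
  by (rule integrable_mult_of_square_integrable) (auto intro: integrable_sq)

lemma expectation_mult_e: "expectation (\<lambda>\<omega>. e i \<omega> * e j \<omega>) = (if i = j then \<sigma>2 else 0)"
proof (cases "i = j")
  case True
  then show ?thesis using second_moment[of i] by (simp add: power2_eq_square)
next
  case False
  have "indep_vars (\<lambda>_. borel) e {i, j}"
    by (rule indep_vars_subset[OF indep]) auto
  then have "expectation (\<lambda>\<omega>. \<Prod>l\<in>{i, j}. e l \<omega>) = (\<Prod>l\<in>{i, j}. expectation (e l))"
    by (intro indep_vars_lebesgue_integral)
      (auto intro: square_integrable_imp_integrable[OF _ integrable_sq])
  then show ?thesis using False mean_zero by simp
qed

lemma sq_lin_comb_eq: "(\<Sum>k\<in>F. w k * e (g k) \<omega>)\<^sup>2 = (\<Sum>k\<in>F. \<Sum>l\<in>F. w k * w l * (e (g k) \<omega> * e (g l) \<omega>))"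
  by (simp add: power2_eq_square sum_product mult_ac)

lemma integrable_sq_lin_comb: "integrable M (\<lambda>\<omega>. (\<Sum>k\<in>F. w k * e (g k) \<omega>)\<^sup>2)"
  unfolding sq_lin_comb_eq by (intro Bochner_Integration.integrable_sum integrable_mult_right integrable_mult_e)

lemma expectation_sq_lin_comb:
  assumes "finite F" and "inj_on g F"
  shows "expectation (\<lambda>\<omega>. (\<Sum>k\<in>F. w k * e (g k) \<omega>)\<^sup>2) = \<sigma>2 * (\<Sum>k\<in>F. (w k)\<^sup>2)"
proof -
  have "expectation (\<lambda>\<omega>. (\<Sum>k\<in>F. w k * e (g k) \<omega>)\<^sup>2)
      = (\<Sum>k\<in>F. \<Sum>l\<in>F. w k * w l * expectation (\<lambda>\<omega>. e (g k) \<omega> * e (g l) \<omega>))"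
    unfolding sq_lin_comb_eq
    by (simp add: Bochner_Integration.integral_sum integrable_mult_e Bochner_Integration.integrable_sum)
  also have "\<dots> = (\<Sum>k\<in>F. \<Sum>l\<in>F. if l = k then w k * w l * \<sigma>2 else 0)"
    by (intro sum.cong refl) (auto simp: expectation_mult_e dest: inj_onD[OF \<open>inj_on g F\<close>])
  also have "\<dots> = \<sigma>2 * (\<Sum>k\<in>F. (w k)\<^sup>2)"
    using \<open>finite F\<close> by (simp add: sum.delta sum_distrib_left power2_eq_square mult_ac)
  finally show ?thesis .
qed

end

lemma (in prob_space) centered_indep_family_iid:
  fixes e :: "'i \<Rightarrow> 'a \<Rightarrow> real"
  assumes indep: "indep_vars (\<lambda>_. borel) e UNIV"
    and ident: "\<And>i. distr M borel (e i) = distr M borel (e i\<^sub>0)"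
    and sq: "integrable M (\<lambda>\<omega>. (e i\<^sub>0 \<omega>)\<^sup>2)" and mean: "expectation (e i\<^sub>0) = 0"
  shows "centered_indep_family M e (expectation (\<lambda>\<omega>. (e i\<^sub>0 \<omega>)\<^sup>2))"
proof
  have [measurable]: "e i \<in> borel_measurable M" for i
    using indep by (simp add: indep_vars_def)
  have integrable_iff: "integrable M (\<lambda>\<omega>. \<phi> (e i \<omega>)) \<longleftrightarrow> integrable M (\<lambda>\<omega>. \<phi> (e i\<^sub>0 \<omega>))"
    and integral_eq: "expectation (\<lambda>\<omega>. \<phi> (e i \<omega>)) = expectation (\<lambda>\<omega>. \<phi> (e i\<^sub>0 \<omega>))"
    if [measurable]: "\<phi> \<in> borel_measurable borel" for \<phi> :: "real \<Rightarrow> real" and i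
    using integrable_distr_eq[of "e i" M borel \<phi>] integrable_distr_eq[of "e i\<^sub>0" M borel \<phi>]
      integral_distr[of "e i" M borel \<phi>] integral_distr[of "e i\<^sub>0" M borel \<phi>]
    by (simp_all add: ident[of i])
  fix i
  show "integrable M (\<lambda>\<omega>. (e i \<omega>)\<^sup>2)"
    using sq integrable_iff[of "\<lambda>y. y\<^sup>2" i] by simp
  show "expectation (e i) = 0"
    using mean integral_eq[of "\<lambda>y. y" i] by simp
  show "expectation (\<lambda>\<omega>. (e i \<omega>)\<^sup>2) = expectation (\<lambda>\<omega>. (e i\<^sub>0 \<omega>)\<^sup>2)"
    using integral_eq[of "\<lambda>y. y\<^sup>2" i] by simp
qed (rule indep)

section \<open>Truncations of the linear field\<close>

lemma finite_box_idx: "finite (box_idx N :: ('d::finite \<Rightarrow> int) set)"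
proof (rule finite_subset)
  show "box_idx N \<subseteq> {k. \<forall>\<tau>. (\<tau> \<in> (UNIV :: 'd set) \<longrightarrow> k \<tau> \<in> {0..int N - 1}) \<and> (\<tau> \<notin> UNIV \<longrightarrow> k \<tau> = 0)}"
    by (auto simp: box_idx_def)
  show "finite {k. \<forall>\<tau>. (\<tau> \<in> (UNIV :: 'd set) \<longrightarrow> k \<tau> \<in> {0..int N - 1}) \<and> (\<tau> \<notin> UNIV \<longrightarrow> k \<tau> = (0::int))}"
    by (rule finite_set_of_finite_funs) auto
qed

lemma box_idx_mono: "m \<le> N \<Longrightarrow> box_idx m \<subseteq> box_idx N"
  unfolding box_idx_def by (auto intro: order.strict_trans2)

lemma box_idx_diff_subset_tail:
  "box_idx N - box_idx m \<subseteq> {k :: 'd::finite \<Rightarrow> int. nonneg_idx k \<and> sup_norm_idx k \<ge> int m}"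
proof
  fix k :: "'d \<Rightarrow> int"
  assume k: "k \<in> box_idx N - box_idx m"
  then have nonneg: "\<And>\<tau>. 0 \<le> k \<tau>"
    by (auto simp: box_idx_def)
  from k obtain \<tau> where "\<not> k \<tau> \<le> int m - 1"
    using nonneg by (auto simp: box_idx_def)
  then have "int m \<le> k \<tau>"
    by simp
  also have "k \<tau> \<le> sup_norm_idx k"
  proof -
    have "\<bar>k \<tau>\<bar> \<le> Max (range (\<lambda>\<tau>. \<bar>k \<tau>\<bar>))"
      by (rule Max_ge) auto
    with nonneg[of \<tau>] show ?thesis
      by (simp add: sup_norm_idx_def)
  qed
  finally show "k \<in> {k. nonneg_idx k \<and> sup_norm_idx k \<ge> int m}"
    using nonneg by (simp add: nonneg_idx_def)
qed

lemma inj_shift_idx: "inj (\<lambda>k \<tau>. i \<tau> - k \<tau> :: int)"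
  by (rule injI) (simp add: fun_eq_iff)

lemma X_trunc_measurable [measurable]:
  assumes [measurable]: "\<And>j. eps j \<in> borel_measurable M"
  shows "X_trunc eps a N i \<in> borel_measurable M"
  unfolding X_trunc_def[abs_def] by measurable

lemma X_trunc_increment:
  "m \<le> N \<Longrightarrow> X_trunc eps a N i \<omega> - X_trunc eps a m i \<omega>
    = (\<Sum>k\<in>box_idx N - box_idx m. a k * eps (\<lambda>\<tau>. i \<tau> - k \<tau>) \<omega>)"
  unfolding X_trunc_def
  by (simp add: sum_diff[OF finite_box_idx box_idx_mono])

lemma B_tail_nonneg: "0 \<le> B_tail a m"
  by (simp add: B_tail_def infsum_nonneg)

lemma (in prob_space) indep_X_trunc_increment:
  assumes indep: "indep_vars (\<lambda>_. borel) eps UNIV" and "m \<le> N"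
  shows "indep_var lborel (X_trunc eps a m i) lborel (\<lambda>\<omega>. X_trunc eps a N i \<omega> - X_trunc eps a m i \<omega>)"
proof -
  have "(\<lambda>k \<tau>. i \<tau> - k \<tau>) ` box_idx m \<inter> (\<lambda>k \<tau>. i \<tau> - k \<tau>) ` (box_idx N - box_idx m) = {}"
    using inj_shift_idx[of i] by (auto dest: injD)
  moreover have "(\<lambda>\<omega>. X_trunc eps a N i \<omega> - X_trunc eps a m i \<omega>)
      = (\<lambda>\<omega>. \<Sum>k\<in>box_idx N - box_idx m. a k * eps (\<lambda>\<tau>. i \<tau> - k \<tau>) \<omega>)"
    using \<open>m \<le> N\<close> by (simp add: X_trunc_increment)
  ultimately show ?thesis
    using indep_var_lin_comb[OF indep] by (simp add: X_trunc_def[abs_def])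
qed

lemma integral_sq_X_trunc_increment_le:
  fixes eps :: "('d::finite \<Rightarrow> int) \<Rightarrow> 'a \<Rightarrow> real"
  assumes "centered_indep_family M eps \<sigma>2"
    and a_sq: "(\<lambda>k. (a k)\<^sup>2) summable_on {k. nonneg_idx k}" and "m \<le> N"
  shows "integrable M (\<lambda>\<omega>. (X_trunc eps a N i \<omega> - X_trunc eps a m i \<omega>)\<^sup>2)"
    and "(\<integral>\<omega>. (X_trunc eps a N i \<omega> - X_trunc eps a m i \<omega>)\<^sup>2 \<partial>M) \<le> \<sigma>2 * (B_tail a m)\<^sup>2"
proof -
  interpret centered_indep_family M eps \<sigma>2 by fact
  define tail where "tail = {k :: 'd \<Rightarrow> int. nonneg_idx k \<and> sup_norm_idx k \<ge> int m}"
  show "integrable M (\<lambda>\<omega>. (X_trunc eps a N i \<omega> - X_trunc eps a m i \<omega>)\<^sup>2)"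
    using \<open>m \<le> N\<close> by (simp add: X_trunc_increment integrable_sq_lin_comb)
  have "(\<integral>\<omega>. (X_trunc eps a N i \<omega> - X_trunc eps a m i \<omega>)\<^sup>2 \<partial>M)
      = \<sigma>2 * (\<Sum>k\<in>box_idx N - box_idx m. (a k)\<^sup>2)"
    using \<open>m \<le> N\<close> inj_shift_idx[of i]
    by (simp add: X_trunc_increment expectation_sq_lin_comb finite_box_idx inj_on_subset)
  also have "(\<Sum>k\<in>box_idx N - box_idx m. (a k)\<^sup>2) \<le> infsum (\<lambda>k. (a k)\<^sup>2) tail"
  proof (rule finite_sum_le_infsum)
    show "(\<lambda>k. (a k)\<^sup>2) summable_on tail"
      by (rule summable_on_subset_banach[OF a_sq]) (auto simp: tail_def)
  qed (use box_idx_diff_subset_tail[of N m] in \<open>auto simp: tail_def finite_box_idx\<close>)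
  also have "infsum (\<lambda>k. (a k)\<^sup>2) tail = (B_tail a m)\<^sup>2"
    by (simp add: B_tail_def tail_def infsum_nonneg)
  finally show "(\<integral>\<omega>. (X_trunc eps a N i \<omega> - X_trunc eps a m i \<omega>)\<^sup>2 \<partial>M) \<le> \<sigma>2 * (B_tail a m)\<^sup>2"
    using second_moment_nonneg by (simp add: mult_left_mono)
qed

lemma kernel_truncation_step_L2_le:
  assumes fam: "centered_indep_family M eps \<sigma>2"
    and a_sq: "(\<lambda>k. (a k)\<^sup>2) summable_on {k. nonneg_idx k}" and "m \<le> N"
    and dens: "distributed M lborel (X_trunc eps a m i) (\<lambda>y. ennreal (q y))"
    and q_le: "\<And>y. q y \<le> c" and q_nonneg: "\<And>y. 0 \<le> q y"
    and K_meas: "K \<in> borel_measurable borel" and K_nonneg: "\<And>u. 0 \<le> K u"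
    and lip: "\<And>u v. \<bar>K u - K v\<bar> \<le> L * \<bar>u - v\<bar>" and "0 \<le> L"
    and K1: "(\<integral>\<^sup>+u. ennreal (K u) \<partial>lborel) = 1" and h: "0 < h"
  shows "L2_norm M (\<lambda>\<omega>. scaled_kernel K h x (X_trunc eps a m i \<omega>) - scaled_kernel K h x (X_trunc eps a N i \<omega>))
    \<le> sqrt (2 * L * c * sqrt \<sigma>2) * sqrt (B_tail a m / h)"
proof -
  interpret centered_indep_family M eps \<sigma>2 by (rule fam)
  define S where "S = X_trunc eps a m i"
  define D where "D = (\<lambda>\<omega>. X_trunc eps a N i \<omega> - X_trunc eps a m i \<omega>)"
  note increment = integral_sq_X_trunc_increment_le[OF fam a_sq \<open>m \<le> N\<close>, of i]
  have c: "0 \<le> c" using q_le[of 0] q_nonneg[of 0] by simp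
  have "L2_norm M D \<le> sqrt (\<sigma>2 * (B_tail a m)\<^sup>2)"
    unfolding L2_norm_def D_def using increment(2) by simp
  also have "\<dots> = sqrt \<sigma>2 * B_tail a m"
    using B_tail_nonneg[of a m] by (simp add: real_sqrt_mult)
  finally have L2_D: "L2_norm M D \<le> sqrt \<sigma>2 * B_tail a m" .
  have "(\<integral>\<omega>. (scaled_kernel K h x (S \<omega>) - scaled_kernel K h x (S \<omega> + D \<omega>))\<^sup>2 \<partial>M)
      \<le> 2 * L * c * L2_norm M D / h"
    using indep_X_trunc_increment[OF indep \<open>m \<le> N\<close>] dens increment(1)
    unfolding S_def D_def
    by (intro scaled_kernel_perturbation_sq_le[OF _ _ q_le q_nonneg K_meas K_nonneg lip \<open>0 \<le> L\<close> K1 h])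
  also have "\<dots> \<le> 2 * L * c * (sqrt \<sigma>2 * B_tail a m) / h"
    using L2_D c \<open>0 \<le> L\<close> h by (intro divide_right_mono mult_left_mono) auto
  also have "\<dots> = (sqrt (2 * L * c * sqrt \<sigma>2) * sqrt (B_tail a m / h))\<^sup>2"
    using c \<open>0 \<le> L\<close> h second_moment_nonneg B_tail_nonneg[of a m]
    by (simp add: power_mult_distrib)
  finally show ?thesis
    unfolding L2_norm_def S_def D_def
    using c \<open>0 \<le> L\<close> h second_moment_nonneg B_tail_nonneg[of a m]
    by (intro real_le_lsqrt) auto
qed

lemma kernel_truncation_L2_le:
  assumes fam: "centered_indep_family M eps \<sigma>2"
    and a_sq: "(\<lambda>k. (a k)\<^sup>2) summable_on {k. nonneg_idx k}"
    and X_meas [measurable]: "X \<in> borel_measurable M" and X_sq: "integrable M (\<lambda>\<omega>. (X \<omega>)\<^sup>2)"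
    and X_lim: "(\<lambda>N. \<integral>\<omega>. (X \<omega> - X_trunc eps a N i \<omega>)\<^sup>2 \<partial>M) \<longlonglongrightarrow> 0"
    and dens: "distributed M lborel (X_trunc eps a m i) (\<lambda>y. ennreal (q y))"
    and q_le: "\<And>y. q y \<le> c" and q_nonneg: "\<And>y. 0 \<le> q y"
    and K_meas [measurable]: "K \<in> borel_measurable borel" and K_nonneg: "\<And>u. 0 \<le> K u"
    and lip: "\<And>u v. \<bar>K u - K v\<bar> \<le> L * \<bar>u - v\<bar>" and "0 \<le> L"
    and K1: "(\<integral>\<^sup>+u. ennreal (K u) \<partial>lborel) = 1" and h: "0 < h"
  shows "L2_norm M (\<lambda>\<omega>. scaled_kernel K h x (X_trunc eps a m i \<omega>) - scaled_kernel K h x (X \<omega>))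
    \<le> sqrt (2 * L * c * sqrt \<sigma>2) * sqrt (B_tail a m / h)"
proof -
  interpret centered_indep_family M eps \<sigma>2 by (rule fam)
  define f where "f = scaled_kernel K h x"
  define C where "C = sqrt (2 * L * c * sqrt \<sigma>2) * sqrt (B_tail a m / h)"
  define Lf where "Lf = L / (h * sqrt h)"
  have f_lip: "\<bar>f y - f z\<bar> \<le> Lf * \<bar>y - z\<bar>" for y z
    unfolding f_def Lf_def by (rule scaled_kernel_lipschitz[OF lip h])
  have "Lf \<ge> 0" using \<open>0 \<le> L\<close> h by (simp add: Lf_def)
  have Xt_sq: "integrable M (\<lambda>\<omega>. (X_trunc eps a N i \<omega>)\<^sup>2)" for N
    unfolding X_trunc_def by (rule integrable_sq_lin_comb)
  note comp = L2_norm_comp_lipschitz_le[where f=f, OF _ _ _ f_lip \<open>Lf \<ge> 0\<close>]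
  have bound: "L2_norm M (\<lambda>\<omega>. f (X_trunc eps a m i \<omega>) - f (X \<omega>))
      \<le> C + Lf * L2_norm M (\<lambda>\<omega>. X_trunc eps a N i \<omega> - X \<omega>)" if "m \<le> N" for N
  proof -
    have "L2_norm M (\<lambda>\<omega>. f (X_trunc eps a m i \<omega>) - f (X \<omega>))
        = L2_norm M (\<lambda>\<omega>. (f (X_trunc eps a m i \<omega>) - f (X_trunc eps a N i \<omega>))
            + (f (X_trunc eps a N i \<omega>) - f (X \<omega>)))"
      by simp
    also have "\<dots> \<le> L2_norm M (\<lambda>\<omega>. f (X_trunc eps a m i \<omega>) - f (X_trunc eps a N i \<omega>))
        + L2_norm M (\<lambda>\<omega>. f (X_trunc eps a N i \<omega>) - f (X \<omega>))"
      by (intro L2_norm_add_le comp(1) integrable_sq_diff Xt_sq X_sq) (auto simp: f_def)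
    also have "\<dots> \<le> C + Lf * L2_norm M (\<lambda>\<omega>. X_trunc eps a N i \<omega> - X \<omega>)"
      unfolding f_def C_def
      by (intro add_mono kernel_truncation_step_L2_le[OF fam a_sq \<open>m \<le> N\<close> dens q_le q_nonneg
          K_meas K_nonneg lip \<open>0 \<le> L\<close> K1 h] comp(2)[unfolded f_def] integrable_sq_diff Xt_sq X_sq)
        auto
    finally show ?thesis .
  qed
  have "(\<lambda>N. L2_norm M (\<lambda>\<omega>. X_trunc eps a N i \<omega> - X \<omega>)) \<longlonglongrightarrow> 0"
    using tendsto_real_sqrt[OF X_lim] by (simp add: L2_norm_def power2_commute)
  then have "(\<lambda>N. C + Lf * L2_norm M (\<lambda>\<omega>. X_trunc eps a N i \<omega> - X \<omega>)) \<longlonglongrightarrow> C"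
    using tendsto_add[OF tendsto_const tendsto_mult_left[of _ 0 _ Lf]] by simp
  moreover have "\<forall>\<^sub>F N in sequentially. L2_norm M (\<lambda>\<omega>. f (X_trunc eps a m i \<omega>) - f (X \<omega>))
      \<le> C + Lf * L2_norm M (\<lambda>\<omega>. X_trunc eps a N i \<omega> - X \<omega>)"
    using eventually_ge_at_top[of m] by eventually_elim (rule bound)
  ultimately show ?thesis
    unfolding C_def[symmetric] f_def[symmetric]
    by (intro tendsto_lowerbound) auto
qed

lemma centered_kernel_truncation_L2_le:
  assumes fam: "centered_indep_family M eps \<sigma>2"
    and a_sq: "(\<lambda>k. (a k)\<^sup>2) summable_on {k. nonneg_idx k}"
    and X_meas [measurable]: "X \<in> borel_measurable M" and X_sq: "integrable M (\<lambda>\<omega>. (X \<omega>)\<^sup>2)"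
    and X_lim: "(\<lambda>N. \<integral>\<omega>. (X \<omega> - X_trunc eps a N i \<omega>)\<^sup>2 \<partial>M) \<longlonglongrightarrow> 0"
    and dens: "distributed M lborel (X_trunc eps a m i) (\<lambda>y. ennreal (q y))"
    and q_le: "\<And>y. q y \<le> c" and q_nonneg: "\<And>y. 0 \<le> q y"
    and K_meas [measurable]: "K \<in> borel_measurable borel" and K_nonneg: "\<And>u. 0 \<le> K u"
    and K_le: "\<And>u. K u \<le> \<kappa>" and lip: "\<And>u v. \<bar>K u - K v\<bar> \<le> L * \<bar>u - v\<bar>" and "0 \<le> L"
    and K1: "(\<integral>\<^sup>+u. ennreal (K u) \<partial>lborel) = 1" and h: "0 < h"
  shows "L2_norm M (\<lambda>\<omega>.
      (scaled_kernel K h x (X_trunc eps a m i \<omega>) - (\<integral>\<omega>'. scaled_kernel K h x (X_trunc eps a m i \<omega>') \<partial>M))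
      - (scaled_kernel K h x (X \<omega>) - (\<integral>\<omega>'. scaled_kernel K h x (X \<omega>') \<partial>M)))
    \<le> sqrt (2 * L * c * sqrt \<sigma>2) * sqrt (B_tail a m / h)"
proof -
  interpret centered_indep_family M eps \<sigma>2 by (rule fam)
  note sq = integrable_sq_scaled_kernel[where x=x, OF K_meas _ K_nonneg K_le h]
  have "L2_norm M (\<lambda>\<omega>.
      (scaled_kernel K h x (X_trunc eps a m i \<omega>) - (\<integral>\<omega>'. scaled_kernel K h x (X_trunc eps a m i \<omega>') \<partial>M))
      - (scaled_kernel K h x (X \<omega>) - (\<integral>\<omega>'. scaled_kernel K h x (X \<omega>') \<partial>M)))
    \<le> L2_norm M (\<lambda>\<omega>. scaled_kernel K h x (X_trunc eps a m i \<omega>) - scaled_kernel K h x (X \<omega>))"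
    by (intro L2_norm_centered_diff_le sq) measurable
  also have "\<dots> \<le> sqrt (2 * L * c * sqrt \<sigma>2) * sqrt (B_tail a m / h)"
    by (rule kernel_truncation_L2_le[OF fam a_sq X_meas X_sq X_lim dens q_le q_nonneg K_meas K_nonneg
          lip \<open>0 \<le> L\<close> K1 h])
  finally show ?thesis .
qed

theorem lemma3:
  fixes M :: "'a measure"
    and eps :: "('d::finite \<Rightarrow> int) \<Rightarrow> 'a \<Rightarrow> real"
    and a :: "('d \<Rightarrow> int) \<Rightarrow> real"
    and X :: "('d \<Rightarrow> int) \<Rightarrow> 'a \<Rightarrow> real"
    and K :: "real \<Rightarrow> real"
    and b :: "nat \<Rightarrow> real"
    and m :: "nat \<Rightarrow> nat"
    and p :: "real \<Rightarrow> real"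
    and pm :: "nat \<Rightarrow> real \<Rightarrow> real"
    and pj :: "('d \<Rightarrow> int) \<Rightarrow> real \<times> real \<Rightarrow> real"
    and pjm :: "('d \<Rightarrow> int) \<Rightarrow> nat \<Rightarrow> real \<times> real \<Rightarrow> real"
    and x :: real
  assumes M: "prob_space M"
    \<comment> \<open>innovations: i.i.d., mean zero, finite second moment\<close>
    and eps_rv: "\<And>i. eps i \<in> borel_measurable M"
    and eps_indep: "prob_space.indep_vars M (\<lambda>_. borel) eps UNIV"
    and eps_ident: "\<And>i. distr M borel (eps i) = distr M borel (eps (\<lambda>_. 0))"
    and eps_sq: "integrable M (\<lambda>\<omega>. (eps (\<lambda>_. 0) \<omega>)\<^sup>2)"
    and eps_mean: "integral\<^sup>L M (eps (\<lambda>_. 0)) = 0"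
    \<comment> \<open>square-summable coefficients\<close>
    and a_sq: "(\<lambda>k. (a k)\<^sup>2) summable_on {k. nonneg_idx k}"
    \<comment> \<open>X_i = sum_{k >= 0} a_k eps_{i-k}, as the L^2 limit of the box partial sums\<close>
    and X_rv: "\<And>i. X i \<in> borel_measurable M"
    and X_sq: "\<And>i. integrable M (\<lambda>\<omega>. (X i \<omega>)\<^sup>2)"
    and X_lim: "\<And>i. (\<lambda>N. integral\<^sup>L M (\<lambda>\<omega>. (X i \<omega> - X_trunc eps a N i \<omega>)\<^sup>2)) \<longlonglongrightarrow> 0"
    \<comment> \<open>kernel: bounded Lipschitz probability density\<close>
    and K_nonneg: "\<And>u. 0 \<le> K u"
    and K_int: "(K has_integral 1) UNIV"
    and K_bdd: "bounded (range K)"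
    and K_lip: "\<exists>L. L-lipschitz_on UNIV K"
    \<comment> \<open>bandwidths and truncation levels\<close>
    and b_pos: "\<And>n. 0 < b n"
    and b_lim: "b \<longlonglongrightarrow> 0"
    and b_nd: "filterlim (\<lambda>n. real n ^ CARD('d) * b n) at_top sequentially"
    and m_pos: "\<And>n. 0 < m n"
    \<comment> \<open>Condition D (i)\<close>
    and p_nonneg: "\<And>y. 0 \<le> p y"
    and p_dens: "distributed M lborel (X (\<lambda>_. 0)) (\<lambda>y. ennreal (p y))"
    and pm_nonneg: "\<And>k y. 0 \<le> pm k y"
    and pm_dens: "\<And>k. 0 < k \<Longrightarrow>
        distributed M lborel (X_trunc eps a k (\<lambda>_. 0)) (\<lambda>y. ennreal (pm k y))"
    and D_lip: "\<exists>L. L-lipschitz_on UNIV p \<and> (\<forall>k>0. L-lipschitz_on UNIV (pm k))"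
    and p_bdd: "\<exists>c. \<forall>y. p y \<le> c"
    and pm_bdd: "\<exists>c. \<forall>k>0. \<forall>y. pm k y \<le> c"
    \<comment> \<open>Condition D (ii)\<close>
    and pj_nonneg: "\<And>i z. 0 \<le> pj i z"
    and pj_dens: "\<And>i. i \<noteq> (\<lambda>_. 0) \<Longrightarrow>
        distributed M (lborel \<Otimes>\<^sub>M lborel) (\<lambda>\<omega>. (X (\<lambda>_. 0) \<omega>, X i \<omega>)) (\<lambda>z. ennreal (pj i z))"
    and pjm_nonneg: "\<And>i k z. 0 \<le> pjm i k z"
    and pjm_dens: "\<And>i k. i \<noteq> (\<lambda>_. 0) \<Longrightarrow> 0 < k \<Longrightarrow>
        distributed M (lborel \<Otimes>\<^sub>M lborel)
          (\<lambda>\<omega>. (X_trunc eps a k (\<lambda>_. 0) \<omega>, X_trunc eps a k i \<omega>)) (\<lambda>z. ennreal (pjm i k z))"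
    and pj_bdd: "\<exists>c. \<forall>i. i \<noteq> (\<lambda>_. 0) \<longrightarrow> (\<forall>z. pj i z \<le> c)"
    and pjm_bdd: "\<exists>c. \<forall>k>0. \<forall>i. i \<noteq> (\<lambda>_. 0) \<longrightarrow> (\<forall>z. pjm i k z \<le> c)"
  shows "\<exists>C. \<forall>n. L2_norm M (\<lambda>\<omega>.
            (K ((x - X_trunc eps a (m n) (\<lambda>_. 0) \<omega>) / b n) / sqrt (b n)
              - integral\<^sup>L M (\<lambda>\<omega>'. K ((x - X_trunc eps a (m n) (\<lambda>_. 0) \<omega>') / b n) / sqrt (b n)))
          - (K ((x - X (\<lambda>_. 0) \<omega>) / b n) / sqrt (b n)
              - integral\<^sup>L M (\<lambda>\<omega>'. K ((x - X (\<lambda>_. 0) \<omega>') / b n) / sqrt (b n))))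
         \<le> C * (sqrt (B_tail a (m n) / b n) + sqrt (b n))"
proof -
  interpret prob_space M by (rule M)
  obtain L where "L-lipschitz_on UNIV K" using K_lip by blast
  note K = lipschitz_probability_density[OF K_nonneg K_int this]
  obtain \<kappa> where "\<And>u. \<bar>K u\<bar> \<le> \<kappa>" using K_bdd by (auto simp: bounded_iff)
  then have K_le: "\<And>u. K u \<le> \<kappa>" by (meson abs_le_D1)
  obtain c where pm_le: "\<And>k y. 0 < k \<Longrightarrow> pm k y \<le> c" using pm_bdd by blast
  have "0 \<le> c" using pm_le[of 1 0] pm_nonneg[of 1 0] by simp
  define \<sigma>2 where "\<sigma>2 = expectation (\<lambda>\<omega>. (eps (\<lambda>_. 0) \<omega>)\<^sup>2)"
  have fam: "centered_indep_family M eps \<sigma>2"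
    unfolding \<sigma>2_def
    by (rule centered_indep_family_iid[of eps "\<lambda>_. 0", OF eps_indep eps_ident eps_sq eps_mean])
  have "0 \<le> 2 * L * c * sqrt \<sigma>2"
    using K(3) \<open>0 \<le> c\<close> centered_indep_family.second_moment_nonneg[OF fam] by simp
  note bound = centered_kernel_truncation_L2_le[OF fam a_sq X_rv X_sq X_lim pm_dens[OF m_pos]
      pm_le[OF m_pos] pm_nonneg K(1) K_nonneg K_le K(4) K(3) K(2) b_pos, unfolded scaled_kernel_def]
  show ?thesis
    using less_imp_le[OF b_pos] \<open>0 \<le> 2 * L * c * sqrt \<sigma>2\<close>
    by (intro exI[of _ "sqrt (2 * L * c * sqrt \<sigma>2)"] allI order_trans[OF bound] mult_left_mono) auto
qed

end
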